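(* Let $T:\mathbb{Z}\to\mathbb{Z}$ be defined by $T(n)=n/2$ if $n$ is even and $T(n)=(3n+1)/2$ if $n$ is odd. Let $[2]_3$ denote the set of integers congruent to $2 \pmod 3$, and define $F:[2]_3\to[2]_3$ by $F(n)=T(n)$ if $n\equiv 5\pmod 6$ and $F(n)=T(T(n))$ if $n\equiv 2\pmod 6$. Then the $3x+1$ conjecture holds if and only if for every positive integer $n\in[2]_3$ the $F$-trajectory of $n$ eventually reaches $2$ (i.e., $F^k(n)=2$ for some $k\ge 0$).
   Context: The $3x+1$ conjecture is the statement: for every positive integer $n$, the $T$-trajectory $(T^k(n))_{k\ge0}$ eventually reaches the cycle $(2,1)$, i.e., $T^k(n)=1$ for some $k\ge 0$. Iterates are defined by $f^0(n)=n$, $f^{k+1}(n)=f(f^k(n))$. *)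

theory Defs
  imports Main
begin

definition T :: "int \<Rightarrow> int" where
  "T n = (if even n then n div 2 else (3 * n + 1) div 2)"

text \<open>F is only meaningful on integers congruent to 2 mod 3; outside that set
  we (arbitrarily) let it be the identity. Only its values on [2]_3 matter.\<close>
definition F :: "int \<Rightarrow> int" where
  "F n = (if n mod 6 = 5 then T n else if n mod 6 = 2 then T (T n) else n)"

end

theory Submission
  imports Defs
begin

text \<open>On the residue class [2]_3, F is the first-return map of T: from n \<equiv> 5 (mod 6) the
  next T-iterate already lies in [2]_3, and from n \<equiv> 2 (mod 6) the next one lies in [1]_3
  and the one after in [2]_3. Hence a T-trajectory starting in [2]_3 that reaches 2 does so
  along F-iterates, and conversely every F-iterate is a T-iterate. Every positive
  T-trajectory enters [2]_3, because halving leads to an odd number n and then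
  T n = (3n + 1)/2 \<equiv> 2 (mod 3); finally 1 and 2 lie on the same T-cycle.\<close>

definition first_return_map :: "('a \<Rightarrow> bool) \<Rightarrow> ('a \<Rightarrow> 'a) \<Rightarrow> ('a \<Rightarrow> 'a) \<Rightarrow> bool" where
  "first_return_map P f g \<longleftrightarrow>
     (\<forall>x. P x \<longrightarrow> (\<exists>j>0. g x = (f ^^ j) x \<and> P (g x) \<and>
                         (\<forall>i. 0 < i \<longrightarrow> i < j \<longrightarrow> \<not> P ((f ^^ i) x))))"

lemma funpow_eq_funpow_if_step_is_iterate:
  fixes f g :: "'a \<Rightarrow> 'a"
  assumes "\<And>x. \<exists>j. g x = (f ^^ j) x"
  shows "\<exists>K. (g ^^ k) x = (f ^^ K) x"
proof (induction k)
  case 0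
  have "(g ^^ 0) x = (f ^^ 0) x" by simp
  then show ?case by blast
next
  case (Suc k)
  then obtain K where "(g ^^ k) x = (f ^^ K) x" by blast
  moreover obtain j where "g ((f ^^ K) x) = (f ^^ j) ((f ^^ K) x)" using assms by blast
  ultimately have "(g ^^ Suc k) x = (f ^^ (j + K)) x" by (simp add: funpow_add)
  then show ?case by blast
qed

lemma first_return_map_reaches:
  assumes "first_return_map P f g"
  shows "P x \<Longrightarrow> P y \<Longrightarrow> (f ^^ K) x = y \<Longrightarrow> \<exists>k. (g ^^ k) x = y"
proof (induction K arbitrary: x rule: less_induct)
  case (less K)
  show ?case
  proof (cases "K = 0")
    case True
    with less.prems show ?thesis by (metis funpow_0)
  next
    case False
    obtain j where "j > 0" and gx: "g x = (f ^^ j) x" "P (g x)"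
      and skipped: "\<forall>i. 0 < i \<longrightarrow> i < j \<longrightarrow> \<not> P ((f ^^ i) x)"
      using assms \<open>P x\<close> unfolding first_return_map_def by blast
    have "j \<le> K" using skipped False less.prems by (meson linorder_not_le not_gr0)
    then have "(f ^^ (K - j)) (g x) = y"
      using gx less.prems by (metis funpow_add le_add_diff_inverse2 comp_apply)
    then obtain k where "(g ^^ k) (g x) = y"
      using less.IH[of "K - j"] \<open>j > 0\<close> \<open>j \<le> K\<close> gx less.prems by auto
    then have "(g ^^ Suc k) x = y" by (simp add: funpow_Suc_right del: funpow.simps)
    then show ?thesis by blast
  qed
qed

lemma F_eq_funpow_T: "\<exists>j. F n = (T ^^ j) n"
proof -
  have "F n = (T ^^ 1) n \<or> F n = (T ^^ 2) n \<or> F n = (T ^^ 0) n"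
    by (simp add: F_def numeral_2_eq_2)
  then show ?thesis by blast
qed

lemma T_odd: "odd n \<Longrightarrow> T n = 3 * (n div 2) + 2"
  unfolding T_def by presburger

lemma T_mod_3_if_odd: "odd n \<Longrightarrow> T n mod 3 = 2"
  by (simp add: T_odd)

lemma T_mod_3_if_mod_6_eq_2: "n mod 6 = 2 \<Longrightarrow> T n mod 3 = 1"
  unfolding T_def by presburger

lemma T_mod_3_if_mod_3_eq_1:
  assumes "n mod 3 = 1"
  shows "T n mod 3 = 2"
proof (cases "even n")
  case True
  with assms show ?thesis unfolding T_def by presburger
next
  case False
  then show ?thesis by (rule T_mod_3_if_odd)
qed

lemma first_return_map_T_F: "first_return_map (\<lambda>n. n mod 3 = 2) T F"
  unfolding first_return_map_def
proof (intro allI impI)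
  fix n :: int
  assume "n mod 3 = 2"
  then have "n mod 6 = 5 \<or> n mod 6 = 2" by presburger
  then show "\<exists>j>0. F n = (T ^^ j) n \<and> F n mod 3 = 2 \<and>
               (\<forall>i. 0 < i \<longrightarrow> i < j \<longrightarrow> (T ^^ i) n mod 3 \<noteq> 2)"
  proof
    assume mod_6: "n mod 6 = 5"
    then have "odd n" by presburger
    with mod_6 have "F n = (T ^^ 1) n \<and> F n mod 3 = 2"
      by (simp add: F_def T_mod_3_if_odd)
    then show ?thesis by (intro exI[of _ 1]) auto
  next
    assume mod_6: "n mod 6 = 2"
    then have "F n = (T ^^ 2) n \<and> F n mod 3 = 2"
      by (simp add: F_def numeral_2_eq_2 T_mod_3_if_mod_6_eq_2 T_mod_3_if_mod_3_eq_1)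
    moreover have "\<forall>i. 0 < i \<longrightarrow> i < 2 \<longrightarrow> (T ^^ i) n mod 3 \<noteq> 2"
      using T_mod_3_if_mod_6_eq_2[OF mod_6] by (simp add: less_2_cases_iff)
    ultimately show ?thesis by (intro exI[of _ 2]) auto
  qed
qed

lemma funpow_T_reaches_pos_mod_3_eq_2:
  "n > 0 \<Longrightarrow> \<exists>j. (T ^^ j) n > 0 \<and> (T ^^ j) n mod 3 = 2"
proof (induction "nat n" arbitrary: n rule: less_induct)
  case less
  show ?case
  proof (cases "even n")
    case True
    then have "T n > 0" "nat (T n) < nat n" using less.prems by (auto simp: T_def)
    then obtain j where "(T ^^ j) (T n) > 0 \<and> (T ^^ j) (T n) mod 3 = 2"
      using less.hyps by blast
    then have "(T ^^ Suc j) n > 0 \<and> (T ^^ Suc j) n mod 3 = 2"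
      by (simp add: funpow_Suc_right del: funpow.simps)
    then show ?thesis by blast
  next
    case False
    then have "(T ^^ 1) n > 0 \<and> (T ^^ 1) n mod 3 = 2"
      using less.prems by (simp add: T_odd pos_imp_zdiv_nonneg_iff)
    then show ?thesis by blast
  qed
qed

theorem lemma1:
  shows "(\<forall>n::int. n > 0 \<longrightarrow> (\<exists>k. (T ^^ k) n = 1)) \<longleftrightarrow>
         (\<forall>n::int. n > 0 \<longrightarrow> n mod 3 = 2 \<longrightarrow> (\<exists>k. (F ^^ k) n = 2))"
proof (intro iffI allI impI)
  fix n :: int
  assume "\<forall>n::int. n > 0 \<longrightarrow> (\<exists>k. (T ^^ k) n = 1)" and "n > 0" "n mod 3 = 2"
  then obtain k where "(T ^^ k) n = 1" by blast
  then have T_reaches: "(T ^^ Suc k) n = 2" by (simp add: T_def)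
  show "\<exists>k. (F ^^ k) n = 2"
    using first_return_map_reaches[OF first_return_map_T_F \<open>n mod 3 = 2\<close> _ T_reaches] by simp
next
  fix n :: int
  assume F_reaches: "\<forall>n::int. n > 0 \<longrightarrow> n mod 3 = 2 \<longrightarrow> (\<exists>k. (F ^^ k) n = 2)" and "n > 0"
  then obtain j where "(T ^^ j) n > 0" "(T ^^ j) n mod 3 = 2"
    using funpow_T_reaches_pos_mod_3_eq_2 by blast
  then obtain k where "(F ^^ k) ((T ^^ j) n) = 2" using F_reaches by blast
  then obtain K where "(T ^^ K) ((T ^^ j) n) = 2"
    using funpow_eq_funpow_if_step_is_iterate[OF F_eq_funpow_T] by metis
  then have "(T ^^ Suc (K + j)) n = 1" by (simp add: funpow_add T_def)
  then show "\<exists>k. (T ^^ k) n = 1" by blast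
qed

end
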